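(* Let $\Omega\subseteq\mathbb{C}$ be an open disc centered at the origin, $M:\Omega\to\mathbb{C}^{n\times n}$ analytic with $M(0)$ invertible, written as $M(\lambda)=\sum_{i=1}^mM_if_i(\lambda)$ with $f_i$ scalar analytic on $\Omega$, and let $\mathcal{B}$ be the operator defined in the context. Let $Y\in\mathbb{C}^{n\times p}$ and $S\in\mathbb{C}^{p\times p}$ with $S$ invertible and $\sigma(S)\subset\Omega$, and let $F(\theta):=Y\exp(\theta S)$. Then for all $\theta$, $$(\mathcal{B}F)(\theta)-F(\theta)S^{-1}=-M(0)^{-1}\mathbb{M}(Y,S)S^{-1},$$ where $\mathbb{M}(Y,S):=\sum_{i=1}^mM_iYf_i(S)$.
   Context: $B(\lambda)=M(0)^{-1}\frac{M(0)-M(\lambda)}{\lambda}$ for $\lambda\ne0$, extended analytically to $0$. $\mathcal{B}$ acts on smooth $\varphi:\mathbb{R}\to\mathbb{C}^n$ (for which the series converges) by $(\mathcal{B}\varphi)(\theta)=\int_0^\theta\varphi(\hat\theta)d\hat\theta+\sum_{i=0}^\infty\frac{1}{i!}B^{(i)}(0)\varphi^{(i)}(0)$, applied columnwise to matrix-valued functions. $f_i(S)$ denotes the matrix function. *)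

theory Defs
  imports "HOL-Complex_Analysis.Complex_Analysis"
begin

text \<open>Complex matrices are represented as complex^'cols^'rows (HOL-Analysis);
  the dimensions n, p are finite type variables.\<close>

definition msc :: "complex \<Rightarrow> complex^'b^'a \<Rightarrow> complex^'b^'a" where
  "msc c A = (\<chi> i j. c * A$i$j)"

primrec mpow :: "complex^'p^'p \<Rightarrow> nat \<Rightarrow> complex^'p^'p" where
  "mpow A 0 = mat 1"
| "mpow A (Suc k) = A ** mpow A k"

definition spec :: "complex^'p^'p \<Rightarrow> complex set" where
  "spec S = {c. \<exists>v. v \<noteq> 0 \<and> S *v v = c *s v}"

text \<open>Matrix function f(S) of a scalar function f analytic on a disc centred at 0
  containing the spectrum of S, given by its (convergent) Taylor series at 0.\<close>
definition matfun :: "(complex \<Rightarrow> complex) \<Rightarrow> complex^'p^'p \<Rightarrow> complex^'p^'p" where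
  "matfun f S = (\<Sum>k. msc ((deriv ^^ k) f 0 / fact k) (mpow S k))"

definition mexp :: "complex^'p^'p \<Rightarrow> complex^'p^'p" where
  "mexp S = (\<Sum>k. msc (1 / fact k) (mpow S k))"

definition Mfun :: "(nat \<Rightarrow> complex^'n^'n) \<Rightarrow> (nat \<Rightarrow> complex \<Rightarrow> complex) \<Rightarrow> nat
    \<Rightarrow> complex \<Rightarrow> complex^'n^'n" where
  "Mfun Ms f m z = (\<Sum>i<m. msc (f i z) (Ms i))"

definition Bfn :: "(complex \<Rightarrow> complex^'n^'n) \<Rightarrow> complex \<Rightarrow> complex^'n^'n" where
  "Bfn M z = (if z = 0
     then Lim (at 0) (\<lambda>w. matrix_inv (M 0) ** msc (1 / w) (M 0 - M w))
     else matrix_inv (M 0) ** msc (1 / z) (M 0 - M z))"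

definition mder0 :: "(complex \<Rightarrow> complex^'b^'a) \<Rightarrow> nat \<Rightarrow> complex^'b^'a" where
  "mder0 B i = (\<chi> j k. (deriv ^^ i) (\<lambda>z. B z $ j $ k) 0)"

definition vder :: "nat \<Rightarrow> (real \<Rightarrow> complex^'b^'a) \<Rightarrow> real \<Rightarrow> complex^'b^'a" where
  "vder i \<phi> = ((\<lambda>g t. vector_derivative g (at t)) ^^ i) \<phi>"

definition int0 :: "(real \<Rightarrow> complex^'b^'a) \<Rightarrow> real \<Rightarrow> complex^'b^'a" where
  "int0 \<phi> \<theta> = (if 0 \<le> \<theta> then integral {0..\<theta>} \<phi> else - integral {\<theta>..0} \<phi>)"

text \<open>The operator \<B> (applied columnwise = via matrix products).\<close>
definition Bop :: "(complex \<Rightarrow> complex^'n^'n) \<Rightarrow> (real \<Rightarrow> complex^'c^'n) \<Rightarrow> real \<Rightarrow> complex^'c^'n" where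
  "Bop B \<phi> \<theta> = int0 \<phi> \<theta> + (\<Sum>i. msc (1 / fact i) (mder0 B i ** vder i \<phi> 0))"

end

theory Submission
  imports Defs
begin

text \<open>Write c_l(k) for the Taylor coefficients of f_l at 0 and
  q_l(z) = (f_l(z) - f_l(0))/z = sum_k c_l(k+1) z^k. Then B(z) = -M(0)^-1 sum_l q_l(z) M_l,
  so B^(k)(0)/k! = -M(0)^-1 sum_l c_l(k+1) M_l, while F^(k)(0) = Y S^k. Hence the series part
  of \<B>F is -M(0)^-1 sum_l M_l Y q_l(S) with q_l(S) = (f_l(S) - f_l(0) I) S^-1. The integral part
  is F(theta) S^-1 - Y S^-1, and its second term cancels against
  M(0)^-1 (sum_l f_l(0) M_l) Y S^-1 = Y S^-1.

  All matrix power series in S converge because |S^k| <= C sigma^k for some sigma < r: the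
  entries of the resolvent (I - w S)^-1 = sum_k w^k S^k are holomorphic for |w| < 1/rho, where
  rho < r bounds the spectrum, so their Taylor coefficients, the entries of S^k, grow at most
  like sigma^k.\<close>

no_notation fps_nth (infixl \<open>$\<close> 75)

section \<open>Matrix algebra\<close>

lemma msc_nth [simp]: "msc c A $ j $ l = c * A $ j $ l"
  by (simp add: msc_def)

lemma matrix_mult_nth: "(A ** B) $ i $ j = (\<Sum>k\<in>UNIV. A $ i $ k * B $ k $ j)"
  by (simp add: matrix_matrix_mult_def)

lemma msc_mult_left: "msc c A ** B = msc c (A ** B)"
  by (simp add: vec_eq_iff matrix_mult_nth sum_distrib_left mult.assoc)

lemma msc_mult_right: "(A::complex^'b^'a) ** msc c B = msc c (A ** B)"
  by (simp add: vec_eq_iff matrix_mult_nth sum_distrib_left mult.left_commute)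

lemma msc_msc [simp]: "msc a (msc b A) = msc (a * b) A"
  by (simp add: vec_eq_iff mult.assoc)

lemma msc_one [simp]: "msc 1 A = A"
  by (simp add: vec_eq_iff)

lemma msc_zero [simp]: "msc 0 A = 0"
  by (simp add: vec_eq_iff)

lemma msc_zero_right [simp]: "msc c 0 = 0"
  by (simp add: vec_eq_iff)

lemma msc_add: "msc c (A + B) = msc c A + msc c B"
  by (simp add: vec_eq_iff distrib_left)

lemma msc_diff: "msc c (A - B) = msc c A - msc c B"
  by (simp add: vec_eq_iff right_diff_distrib)

lemma msc_sum: "msc c (\<Sum>l\<in>L. A l) = (\<Sum>l\<in>L. msc c (A l))"
  by (induct L rule: infinite_finite_induct) (auto simp: msc_add)

lemma msc_of_real: "msc (of_real x) A = x *\<^sub>R A"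
  by (simp add: vec_eq_iff scaleR_conv_of_real[symmetric])

lemma msc_mvec: "msc c A *v v = c *s (A *v v)"
  by (simp add: vec_eq_iff matrix_vector_mult_def sum_distrib_left mult.assoc)

lemma mpow_Suc': "mpow A (Suc k) = mpow A k ** A"
  by (induct k) (simp_all add: matrix_mul_assoc)

lemma mpow_msc: "mpow (msc c A) k = msc (c ^ k) (mpow A k)"
  by (induct k) (simp_all add: msc_mult_left msc_mult_right mult.commute)

lemma matrix_add_rdistrib: "((B::'a::semiring_1^_^_) + C) ** A = B ** A + C ** A"
  by (simp add: vec_eq_iff matrix_matrix_mult_def sum.distrib distrib_right)

lemma matrix_mul_sum_right: "(A::'a::semiring_1^_^_) ** (\<Sum>l\<in>L. B l) = (\<Sum>l\<in>L. A ** B l)"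
  by (induct L rule: infinite_finite_induct) (auto simp: matrix_add_ldistrib)

lemma matrix_mul_sum_left: "(\<Sum>l\<in>L. B l) ** (A::'a::semiring_1^_^_) = (\<Sum>l\<in>L. B l ** A)"
  by (induct L rule: infinite_finite_induct) (auto simp: matrix_add_rdistrib)

lemma matrix_mul_diff_right: "(A::'a::ring_1^_^_) ** (B - C) = A ** B - A ** C"
  by (simp add: vec_eq_iff matrix_mult_nth sum_subtractf right_diff_distrib)

lemma matrix_mul_diff_left: "((B::'a::ring_1^_^_) - C) ** A = B ** A - C ** A"
  by (simp add: vec_eq_iff matrix_mult_nth sum_subtractf left_diff_distrib)

lemma matrix_mul_minus_right: "(A::'a::ring_1^_^_) ** (- B) = - (A ** B)"
  by (simp add: vec_eq_iff matrix_mult_nth sum_negf)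

lemma matrix_mul_minus_left: "(- B::'a::ring_1^_^_) ** A = - (B ** A)"
  by (simp add: vec_eq_iff matrix_mult_nth sum_negf)

lemma bounded_linear_matrix_mul_left: "bounded_linear (\<lambda>A::complex^'c^'b. (X::complex^'b^'a) ** A)"
proof -
  have "linear (\<lambda>A::complex^'c^'b. X ** A)"
    by (rule linearI) (simp_all add: matrix_add_ldistrib msc_mult_right flip: msc_of_real)
  then show ?thesis by (simp add: linear_conv_bounded_linear)
qed

lemma bounded_linear_matrix_mul_right: "bounded_linear (\<lambda>A::complex^'b^'a. A ** (X::complex^'c^'b))"
proof -
  have "linear (\<lambda>A::complex^'b^'a. A ** X)"
    by (rule linearI) (simp_all add: matrix_add_rdistrib msc_mult_left flip: msc_of_real)
  then show ?thesis by (simp add: linear_conv_bounded_linear)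
qed

lemma bounded_linear_matrix_entry: "bounded_linear (\<lambda>A::complex^'b^'a. A $ j $ l)"
  using bounded_linear_compose[OF bounded_linear_vec_nth bounded_linear_vec_nth] .

lemma matrix_inv_right_left:
  assumes "invertible (A::'a::field^'n^'n)"
  shows matrix_inv_right: "A ** matrix_inv A = mat 1"
    and matrix_inv_left: "matrix_inv A ** A = mat 1"
proof -
  have "\<exists>A'. A ** A' = mat 1 \<and> A' ** A = mat 1" using assms by (simp add: invertible_def)
  then have "A ** matrix_inv A = mat 1 \<and> matrix_inv A ** A = mat 1"
    unfolding matrix_inv_def by (rule someI_ex)
  then show "A ** matrix_inv A = mat 1" "matrix_inv A ** A = mat 1" by auto
qed

lemma matrix_inv_unique:
  assumes "(A::'a::field^'n^'n) ** B = mat 1"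
  shows "matrix_inv A = B"
proof -
  have "invertible A"
    using assms matrix_left_right_inverse by (auto simp: invertible_def)
  then have "matrix_inv A = matrix_inv A ** (A ** B)" by (simp add: assms)
  also have "\<dots> = B" by (simp add: matrix_mul_assoc matrix_inv_left \<open>invertible A\<close>)
  finally show ?thesis .
qed

section \<open>An entrywise norm\<close>

definition entrywise_norm :: "complex^'b^'a \<Rightarrow> real" where
  "entrywise_norm A = (\<Sum>j\<in>UNIV. \<Sum>l\<in>UNIV. norm (A $ j $ l))"

lemma entrywise_norm_nonneg: "0 \<le> entrywise_norm A"
  by (simp add: entrywise_norm_def sum_nonneg)

lemma norm_vec_le_sum: "norm (x::'a::real_normed_vector^'n) \<le> (\<Sum>i\<in>UNIV. norm (x $ i))"
  unfolding norm_vec_def by (rule L2_set_le_sum) auto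

lemma norm_le_entrywise_norm: "norm A \<le> entrywise_norm A"
proof -
  have "norm A \<le> (\<Sum>j\<in>UNIV. norm (A $ j))" by (rule norm_vec_le_sum)
  also have "\<dots> \<le> entrywise_norm A" unfolding entrywise_norm_def
    by (intro sum_mono norm_vec_le_sum)
  finally show ?thesis .
qed

lemma entrywise_norm_msc: "entrywise_norm (msc c A) = norm c * entrywise_norm A"
  by (simp add: entrywise_norm_def norm_mult sum_distrib_left)

lemma entrywise_norm_mat_1: "entrywise_norm (mat 1 :: complex^'p^'p) = CARD('p)"
proof -
  have entry: "norm (mat 1 $ j $ l :: complex) = (if j = l then 1 else 0)" for j l
    by (simp add: mat_def)
  show ?thesis by (simp add: entrywise_norm_def entry)
qed

lemma entrywise_norm_mult: "entrywise_norm ((A::complex^'b^'a) ** B) \<le> entrywise_norm A * entrywise_norm B"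
proof -
  define a where "a j = (\<Sum>k\<in>UNIV. norm (A $ j $ k))" for j
  define b where "b l = (\<Sum>k\<in>UNIV. norm (B $ k $ l))" for l
  have "entrywise_norm (A ** B) = (\<Sum>j\<in>UNIV. \<Sum>l\<in>UNIV. norm (\<Sum>k\<in>UNIV. A $ j $ k * B $ k $ l))"
    by (simp add: entrywise_norm_def matrix_mult_nth)
  also have "\<dots> \<le> (\<Sum>j\<in>UNIV. \<Sum>l\<in>UNIV. \<Sum>k\<in>UNIV. norm (A $ j $ k) * norm (B $ k $ l))"
    by (intro sum_mono order_trans[OF norm_sum]) (simp add: norm_mult)
  also have "\<dots> \<le> (\<Sum>j\<in>UNIV. \<Sum>l\<in>UNIV. \<Sum>k\<in>UNIV. norm (A $ j $ k) * b l)"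
    unfolding b_def by (intro sum_mono mult_left_mono member_le_sum) auto
  also have "\<dots> = (\<Sum>j\<in>UNIV. \<Sum>l\<in>UNIV. a j * b l)"
    by (simp add: a_def sum_distrib_right)
  also have "\<dots> = (\<Sum>j\<in>UNIV. a j) * (\<Sum>l\<in>UNIV. b l)"
    by (simp add: sum_product)
  also have "(\<Sum>l\<in>UNIV. b l) = entrywise_norm B"
    unfolding b_def entrywise_norm_def by (rule sum.swap)
  also have "(\<Sum>j\<in>UNIV. a j) = entrywise_norm A"
    unfolding a_def entrywise_norm_def ..
  finally show ?thesis .
qed

lemma entrywise_norm_mpow: "entrywise_norm (mpow (S::complex^'p^'p) k) \<le> CARD('p) * entrywise_norm S ^ k"
proof (induct k)
  case 0 then show ?case by (simp add: entrywise_norm_mat_1)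
next
  case (Suc k)
  have "entrywise_norm (mpow S (Suc k)) \<le> entrywise_norm S * entrywise_norm (mpow S k)"
    by (simp add: entrywise_norm_mult)
  also have "\<dots> \<le> entrywise_norm S * (CARD('p) * entrywise_norm S ^ k)"
    by (intro mult_left_mono Suc entrywise_norm_nonneg)
  finally show ?case by (simp add: algebra_simps)
qed

lemma norm_mvec_le_entrywise_norm: "norm ((A::complex^'b^'a) *v x) \<le> entrywise_norm A * norm x"
proof -
  have "norm (A *v x) \<le> (\<Sum>j\<in>UNIV. norm ((A *v x) $ j))" by (rule norm_vec_le_sum)
  also have "\<dots> \<le> (\<Sum>j\<in>UNIV. \<Sum>l\<in>UNIV. norm (A $ j $ l) * norm x)"
    unfolding matrix_vector_mult_def
  proof (intro sum_mono)
    fix j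
    have "norm (\<Sum>l\<in>UNIV. A $ j $ l * x $ l) \<le> (\<Sum>l\<in>UNIV. norm (A $ j $ l * x $ l))"
      by (rule norm_sum)
    also have "\<dots> \<le> (\<Sum>l\<in>UNIV. norm (A $ j $ l) * norm x)"
      by (intro sum_mono) (simp add: norm_mult mult_left_mono Finite_Cartesian_Product.norm_nth_le)
    finally show "norm ((\<chi> i. \<Sum>j\<in>UNIV. A $ i $ j * x $ j) $ j) \<le> (\<Sum>l\<in>UNIV. norm (A $ j $ l) * norm x)"
      by simp
  qed
  also have "\<dots> = entrywise_norm A * norm x" by (simp add: entrywise_norm_def sum_distrib_right)
  finally show ?thesis .
qed

lemma summable_matrix_power_series:
  assumes "\<And>k. entrywise_norm (mpow (S::complex^'p^'p) k) \<le> C * \<sigma> ^ k"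
    and "summable (\<lambda>k. norm (b k) * \<sigma> ^ k)"
  shows "summable (\<lambda>k. msc (b k) (mpow S k))"
proof (rule summable_norm_cancel)
  have bound: "norm (msc (b k) (mpow S k)) \<le> C * (norm (b k) * \<sigma> ^ k)" for k
  proof -
    have "norm (msc (b k) (mpow S k)) \<le> norm (b k) * entrywise_norm (mpow S k)"
      using norm_le_entrywise_norm[of "msc (b k) (mpow S k)"] by (simp add: entrywise_norm_msc)
    also have "\<dots> \<le> norm (b k) * (C * \<sigma> ^ k)"
      by (intro mult_left_mono assms) auto
    finally show ?thesis by (simp add: mult_ac)
  qed
  have "summable (\<lambda>k. C * (norm (b k) * \<sigma> ^ k))"
    using assms(2) by (rule summable_mult)
  then show "summable (\<lambda>k. norm (msc (b k) (mpow S k)))"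
    by (rule summable_comparison_test') (simp add: bound)
qed

section \<open>Growth of the powers of a matrix\<close>

lemma det_eq_0_iff_kernel: "det (B::'a::field^'p^'p) = 0 \<longleftrightarrow> (\<exists>v. v \<noteq> 0 \<and> B *v v = 0)"
proof -
  have "(\<exists>v. v \<noteq> 0 \<and> B *v v = 0) \<longleftrightarrow> \<not> (\<exists>C. C ** B = mat 1)"
    by (simp add: matrix_left_invertible_ker) blast
  also have "\<dots> \<longleftrightarrow> \<not> invertible B"
    by (simp add: invertible_left_inverse)
  also have "\<dots> \<longleftrightarrow> det B = 0"
    by (simp add: invertible_det_nz)
  finally show ?thesis by simp
qed

lemma spec_iff_det: "c \<in> spec (S::complex^'p^'p) \<longleftrightarrow> det (S - msc c (mat 1)) = 0"
proof -
  have "(S - msc c (mat 1)) *v v = S *v v - c *s v" for v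
    by (simp add: matrix_vector_mult_diff_rdistrib msc_mvec)
  then show ?thesis by (simp add: spec_def det_eq_0_iff_kernel)
qed

lemma spec_norm_le_entrywise_norm:
  assumes "c \<in> spec (S::complex^'p^'p)"
  shows "norm c \<le> entrywise_norm S"
proof -
  obtain v where v: "v \<noteq> 0" "S *v v = c *s v" using assms by (auto simp: spec_def)
  have "norm c * norm v = norm (S *v v)"
    by (simp add: v norm_vec_def norm_mult L2_set_right_distrib)
  also have "\<dots> \<le> entrywise_norm S * norm v" by (rule norm_mvec_le_entrywise_norm)
  finally show ?thesis using v(1) by simp
qed

lemma compact_spec: "compact (spec (S::complex^'p^'p))"
proof (rule compact_eq_bounded_closed[THEN iffD2], intro conjI)
  show "bounded (spec S)"
    by (rule bounded_subset[OF bounded_cball[of 0 "entrywise_norm S"]])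
      (auto dest: spec_norm_le_entrywise_norm)
  have "(\<lambda>c. det (S - msc c (mat 1))) = (\<lambda>c. \<Sum>p\<in>{p. p permutes UNIV}.
      of_int (sign p) * (\<Prod>i\<in>UNIV. S $ i $ p i - c * mat 1 $ i $ p i))"
    by (simp add: det_def)
  then have "continuous_on UNIV (\<lambda>c. det (S - msc c (mat 1)))"
    by (simp only:) (intro continuous_intros)
  moreover have "spec S = {c. det (S - msc c (mat 1)) = 0}"
    by (auto simp: spec_iff_det)
  ultimately show "closed (spec S)"
    by (simp add: closed_Collect_eq continuous_on_const)
qed

lemma spectral_radius_less:
  assumes "spec (S::complex^'p^'p) \<subseteq> ball 0 r" "r > 0"
  obtains \<rho> where "0 \<le> \<rho>" "\<rho> < r" "\<And>c. c \<in> spec S \<Longrightarrow> norm c \<le> \<rho>"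
proof (cases "spec S = {}")
  case True then show ?thesis using that[of 0] assms by auto
next
  case False
  obtain c0 where "c0 \<in> spec S" "\<And>c. c \<in> spec S \<Longrightarrow> norm c \<le> norm c0"
    using continuous_attains_sup[OF compact_spec False, of norm] by (auto intro: continuous_intros)
  then show ?thesis using assms by (intro that[of "norm c0"]) auto
qed

lemma neumann_series:
  fixes S :: "complex^'p^'p"
  assumes "norm w * entrywise_norm S < 1"
  shows "(\<lambda>k. msc (w ^ k) (mpow S k)) sums matrix_inv (mat 1 - msc w S)"
proof -
  define g where "g k = msc (w ^ k) (mpow S k)" for k
  have "entrywise_norm (mpow S k) \<le> CARD('p) * entrywise_norm S ^ k" for k
    by (rule entrywise_norm_mpow)
  moreover have "summable (\<lambda>k. norm (w ^ k) * entrywise_norm S ^ k)"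
    using assms by (simp add: norm_power entrywise_norm_nonneg flip: power_mult_distrib)
  ultimately have sg: "summable g"
    unfolding g_def by (rule summable_matrix_power_series)
  have "(mat 1 - msc w S) ** g k = g k - g (Suc k)" for k
    by (simp add: g_def matrix_mul_diff_left msc_mult_left msc_mult_right msc_diff mult.commute)
  moreover have "(\<lambda>k. g k - g (Suc k)) sums (g 0 - 0)"
    using summable_LIMSEQ_zero[OF sg] by (rule telescope_sums')
  ultimately have "(\<lambda>k. (mat 1 - msc w S) ** g k) sums mat 1"
    by (simp add: g_def)
  moreover have "(\<lambda>k. (mat 1 - msc w S) ** g k) sums ((mat 1 - msc w S) ** suminf g)"
    using bounded_linear.sums[OF bounded_linear_matrix_mul_left summable_sums[OF sg]] .
  ultimately have "matrix_inv (mat 1 - msc w S) = suminf g"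
    using sums_unique2 matrix_inv_unique by metis
  then show ?thesis using summable_sums[OF sg] unfolding g_def by simp
qed

lemma det_resolvent_nonzero:
  assumes "\<And>c. c \<in> spec (S::complex^'p^'p) \<Longrightarrow> norm w * norm c < 1"
  shows "det (mat 1 - msc w S) \<noteq> 0"
proof
  assume "det (mat 1 - msc w S) = 0"
  then obtain v where v: "v \<noteq> 0" "(mat 1 - msc w S) *v v = 0"
    using det_eq_0_iff_kernel by blast
  then have vv: "v = w *s (S *v v)"
    by (simp add: matrix_vector_mult_diff_rdistrib msc_mvec)
  then have "w \<noteq> 0" using v(1) by auto
  have "(1 / w) *s v = S *v v"
    by (subst vv) (simp add: vector_smult_assoc \<open>w \<noteq> 0\<close>)
  then have "1 / w \<in> spec S" using v(1) by (auto simp: spec_def)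
  from assms[OF this] show False using \<open>w \<noteq> 0\<close> by (simp add: norm_divide)
qed

lemma matrix_inv_entry_cramer:
  assumes "det (A::complex^'p^'p) \<noteq> 0"
  shows "matrix_inv A $ j $ l = det (\<chi> a b. if b = j then axis l 1 $ a else A $ a $ b) / det A"
proof -
  have inv: "invertible A" using assms invertible_det_nz by blast
  define x where "x = matrix_inv A *v axis l 1"
  have "A *v x = axis l 1"
    by (simp add: x_def matrix_vector_mul_assoc matrix_inv_right[OF inv])
  then have "x $ j = det (\<chi> a b. if b = j then axis l 1 $ a else A $ a $ b) / det A"
    using cramer[OF assms] by auto
  moreover have "matrix_inv A $ j $ k * axis l 1 $ k = (if k = l then matrix_inv A $ j $ l else 0)" for k
    by (simp add: axis_def)
  then have "x $ j = matrix_inv A $ j $ l"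
    by (simp add: x_def matrix_vector_mult_def)
  ultimately show ?thesis by simp
qed

lemma holomorphic_on_det:
  assumes "\<And>a b. (\<lambda>w. F w $ a $ b) holomorphic_on D"
  shows "(\<lambda>w. det (F w :: complex^'p^'p)) holomorphic_on D"
  unfolding det_def by (intro holomorphic_intros assms)

lemma resolvent_entry_holomorphic:
  assumes "\<And>c. c \<in> spec (S::complex^'p^'p) \<Longrightarrow> R * norm c < 1"
  shows "(\<lambda>w. matrix_inv (mat 1 - msc w S) $ j $ l) holomorphic_on ball 0 R"
proof -
  have det: "det (mat 1 - msc w S) \<noteq> 0" if "w \<in> ball 0 R" for w
  proof (rule det_resolvent_nonzero)
    fix c assume "c \<in> spec S"
    have "norm w * norm c \<le> R * norm c" using that by (intro mult_right_mono) auto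
    then show "norm w * norm c < 1" using assms[OF \<open>c \<in> spec S\<close>] by linarith
  qed
  have "(\<lambda>w. det (\<chi> a b. if b = j then axis l 1 $ a else (mat 1 - msc w S) $ a $ b)
            / det (mat 1 - msc w S)) holomorphic_on ball 0 R"
  proof (intro holomorphic_on_divide holomorphic_on_det det)
    fix a b
    show "(\<lambda>w. (\<chi> a b. if b = j then axis l 1 $ a else (mat 1 - msc w S) $ a $ b) $ a $ b)
        holomorphic_on ball 0 R"
      by (cases "b = j") (auto intro!: holomorphic_intros)
  qed (auto intro!: holomorphic_intros)
  then show ?thesis
    by (rule holomorphic_transform) (simp add: matrix_inv_entry_cramer det)
qed

lemma resolvent_entry_has_fps_expansion:
  "(\<lambda>w. matrix_inv (mat 1 - msc w (S::complex^'p^'p)) $ j $ l)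
     has_fps_expansion Abs_fps (\<lambda>k. mpow S k $ j $ l)"
proof (rule has_fps_expansionI)
  have "0 < entrywise_norm S + 1" using entrywise_norm_nonneg[of S] by linarith
  then have "eventually (\<lambda>u. u \<in> ball 0 (1 / (entrywise_norm S + 1))) (nhds (0::complex))"
    by (intro eventually_nhds_in_open) auto
  then show "eventually (\<lambda>u. (\<lambda>k. fps_nth (Abs_fps (\<lambda>k. mpow S k $ j $ l)) k * u ^ k)
      sums matrix_inv (mat 1 - msc u S) $ j $ l) (nhds 0)"
  proof eventually_elim
    case (elim u)
    then have "norm u * entrywise_norm S < 1"
      using entrywise_norm_nonneg[of S]
      by (simp add: field_simps) (smt (verit) mult_left_mono norm_ge_zero)
    from bounded_linear.sums[OF bounded_linear_matrix_entry neumann_series[OF this], of j l]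
    show ?case by (simp add: mult.commute)
  qed
qed

lemma mpow_entry_growth:
  assumes "0 \<le> \<rho>" "\<rho> < \<sigma>" "\<And>c. c \<in> spec (S::complex^'p^'p) \<Longrightarrow> norm c \<le> \<rho>"
  obtains K where "\<And>k. norm (mpow S k $ j $ l) \<le> K * \<sigma> ^ k"
proof -
  define h where "h = (\<lambda>w. matrix_inv (mat 1 - msc w S) $ j $ l)"
  define R where "R = 2 / (\<rho> + \<sigma>)" \<comment> \<open>so that \<open>1/\<sigma> < R\<close> and \<open>R \<rho> < 1\<close>\<close>
  have "R * norm c < 1" if "c \<in> spec S" for c
  proof -
    have "R * norm c \<le> R * \<rho>"
      using assms(1,2) assms(3)[OF that] by (intro mult_left_mono) (auto simp: R_def)
    also have "\<dots> < 1" using assms(1,2) by (simp add: R_def field_simps)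
    finally show ?thesis .
  qed
  then have "h holomorphic_on ball 0 R"
    unfolding h_def by (rule resolvent_entry_holomorphic)
  moreover have "of_real (1 / \<sigma>) \<in> ball (0::complex) R"
    using assms(1,2) by (simp add: R_def norm_divide field_simps)
  moreover have "(deriv ^^ k) h 0 / fact k = mpow S k $ j $ l" for k
    using fps_nth_fps_expansion[OF resolvent_entry_has_fps_expansion, of S j l k]
    by (simp add: h_def)
  ultimately have "summable (\<lambda>k. mpow S k $ j $ l * of_real (1 / \<sigma>) ^ k)"
    using holomorphic_power_series[of h 0 R "of_real (1 / \<sigma>)"] by (simp add: sums_iff)
  then have "Bseq (\<lambda>k. mpow S k $ j $ l * of_real (1 / \<sigma>) ^ k)"
    using summable_LIMSEQ_zero convergentI convergent_imp_Bseq by blast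
  then obtain K where K: "\<And>k. norm (mpow S k $ j $ l * of_real (1 / \<sigma>) ^ k) \<le> K"
    by (rule BseqE) blast
  show ?thesis
  proof
    fix k
    have "norm (mpow S k $ j $ l) / \<sigma> ^ k \<le> K"
      using K[of k] assms(1,2) by (simp add: norm_mult norm_power norm_divide power_one_over)
    then show "norm (mpow S k $ j $ l) \<le> K * \<sigma> ^ k"
      using assms(1,2) by (simp add: field_simps)
  qed
qed

lemma mpow_growth:
  assumes "spec (S::complex^'p^'p) \<subseteq> ball 0 r" "r > 0"
  obtains \<sigma> C where "0 < \<sigma>" "\<sigma> < r" "\<And>k. entrywise_norm (mpow S k) \<le> C * \<sigma> ^ k"
proof -
  obtain \<rho> where \<rho>: "0 \<le> \<rho>" "\<rho> < r" "\<And>c. c \<in> spec S \<Longrightarrow> norm c \<le> \<rho>"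
    using spectral_radius_less[OF assms] by blast
  define \<sigma> where "\<sigma> = (\<rho> + r) / 2"
  have \<sigma>: "0 < \<sigma>" "\<rho> < \<sigma>" "\<sigma> < r" using \<rho> by (auto simp: \<sigma>_def)
  have "\<forall>j l. \<exists>K. \<forall>k. norm (mpow S k $ j $ l) \<le> K * \<sigma> ^ k"
    using mpow_entry_growth[OF \<rho>(1) \<sigma>(2) \<rho>(3)] by metis
  then obtain K where K: "\<And>j l k. norm (mpow S k $ j $ l) \<le> K j l * \<sigma> ^ k" by metis
  have "entrywise_norm (mpow S k) \<le> (\<Sum>j\<in>UNIV. \<Sum>l\<in>UNIV. K j l) * \<sigma> ^ k" for k
    unfolding entrywise_norm_def sum_distrib_right by (intro sum_mono K)
  with \<sigma> show ?thesis by (intro that) auto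
qed

section \<open>Matrix functions\<close>

lemma summable_norm_fps_expansion:
  assumes "g holomorphic_on ball 0 r" "0 \<le> \<sigma>" "\<sigma> < r"
  shows "summable (\<lambda>k. norm (fps_nth (fps_expansion g 0) k) * \<sigma> ^ k)"
proof -
  define \<tau> where "\<tau> = (\<sigma> + r) / 2"
  have "\<sigma> < \<tau>" "\<tau> < r" using assms by (auto simp: \<tau>_def)
  then have "of_real \<tau> \<in> ball (0::complex) r" using assms(2) by simp
  with holomorphic_power_series[OF assms(1)]
  have "summable (\<lambda>k. fps_nth (fps_expansion g 0) k * of_real \<tau> ^ k)"
    by (auto simp: sums_iff fps_expansion_def)
  from powser_insidea[OF this, of "of_real \<sigma>"] \<open>\<sigma> < \<tau>\<close> assms(2) show ?thesis
    by (simp add: norm_mult norm_power)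
qed

lemma matfun_sums:
  assumes "g holomorphic_on ball 0 r" "spec (S::complex^'p^'p) \<subseteq> ball 0 r" "r > 0"
  shows "(\<lambda>k. msc (fps_nth (fps_expansion g 0) k) (mpow S k)) sums matfun g S"
proof -
  obtain \<sigma> C where "0 < \<sigma>" "\<sigma> < r" "\<And>k. entrywise_norm (mpow S k) \<le> C * \<sigma> ^ k"
    using mpow_growth[OF assms(2,3)] by blast
  then have "summable (\<lambda>k. msc (fps_nth (fps_expansion g 0) k) (mpow S k))"
    using summable_matrix_power_series summable_norm_fps_expansion[OF assms(1)] by force
  then show ?thesis
    by (simp add: matfun_def fps_expansion_def summable_sums)
qed

lemma difference_quotient_matfun_sums:
  assumes "g holomorphic_on ball 0 r" "spec (S::complex^'p^'p) \<subseteq> ball 0 r" "r > 0"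
    and "invertible S"
  shows "(\<lambda>k. msc (fps_nth (fps_expansion g 0) (Suc k)) (mpow S k))
           sums ((matfun g S - msc (g 0) (mat 1)) ** matrix_inv S)"
proof -
  define c where "c = fps_nth (fps_expansion g 0)"
  have "c 0 = g 0" by (simp add: c_def fps_expansion_def)
  moreover have "(\<lambda>k. msc (c k) (mpow S k)) sums matfun g S"
    using matfun_sums[OF assms(1-3)] by (simp add: c_def)
  ultimately have "(\<lambda>k. msc (c (Suc k)) (mpow S (Suc k))) sums (matfun g S - msc (g 0) (mat 1))"
    using sums_Suc_iff[of "\<lambda>k. msc (c k) (mpow S k)" "matfun g S - msc (g 0) (mat 1)"]
    by simp
  from bounded_linear.sums[OF bounded_linear_matrix_mul_right this, of "matrix_inv S"]
  show ?thesis
    by (simp add: c_def mpow_Suc' msc_mult_left matrix_inv_right[OF assms(4)]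
        flip: matrix_mul_assoc del: mpow.simps)
qed

section \<open>The matrix exponential\<close>

lemma mexp_sums: "(\<lambda>k. msc (z ^ k / fact k) (mpow S k)) sums mexp (msc z S)"
proof -
  have "norm (z ^ k / fact k) = norm z ^ k / fact k" for k
    by (simp add: norm_divide norm_power)
  then have "norm (z ^ k / fact k) * entrywise_norm S ^ k
      = inverse (fact k) * (norm z * entrywise_norm S) ^ k" for k
    by (simp add: power_mult_distrib divide_inverse)
  then have "summable (\<lambda>k. norm (z ^ k / fact k) * entrywise_norm S ^ k)"
    using summable_exp[of "norm z * entrywise_norm S"] by simp
  then have "summable (\<lambda>k. msc (z ^ k / fact k) (mpow S k))"
    by (rule summable_matrix_power_series[OF entrywise_norm_mpow])
  then show ?thesis by (simp add: mexp_def mpow_msc summable_sums)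
qed

lemma mexp_zero: "mexp (0::complex^'p^'p) = mat 1"
proof -
  have "(\<lambda>k. msc (1 / fact k) (mpow (0::complex^'p^'p) k)) = (\<lambda>k. if k = 0 then mat 1 else 0)"
    by (auto simp: fun_eq_iff gr0_conv_Suc)
  then show ?thesis
    using sums_single[of 0 "\<lambda>_. mat 1 :: complex^'p^'p"] by (simp add: mexp_def sums_iff)
qed

definition single_entry :: "'a \<Rightarrow> 'b \<Rightarrow> complex \<Rightarrow> complex^'b^'a" where
  "single_entry j l c = (\<chi> a b. if a = j \<and> b = l then c else 0)"

lemma bounded_linear_single_entry: "bounded_linear (single_entry j l)"
proof -
  have "linear (single_entry j l)"
    by (rule linearI) (simp_all add: single_entry_def vec_eq_iff)
  then show ?thesis by (simp add: linear_conv_bounded_linear)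
qed

lemma sum_single_entry: "(\<Sum>j\<in>UNIV. \<Sum>l\<in>UNIV. single_entry j l (A $ j $ l)) = (A::complex^'b^'a)"
proof -
  have "(\<Sum>l\<in>UNIV. single_entry j l (A $ j $ l) $ a $ b) = (if j = a then A $ a $ b else 0)"
    for a b j
    by (simp add: single_entry_def if_distrib cong: if_cong)
  then show ?thesis by (simp add: vec_eq_iff)
qed

lemma has_vector_derivative_entrywise:
  assumes "\<And>j l. ((\<lambda>t. \<phi> t $ j $ l) has_vector_derivative (D $ j $ l)) (at t)"
  shows "((\<phi>::real \<Rightarrow> complex^'b^'a) has_vector_derivative D) (at t)"
proof -
  have "((\<lambda>t. \<Sum>j\<in>UNIV. \<Sum>l\<in>UNIV. single_entry j l (\<phi> t $ j $ l)) has_vector_derivative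
          (\<Sum>j\<in>UNIV. \<Sum>l\<in>UNIV. single_entry j l (D $ j $ l))) (at t)"
    by (intro has_vector_derivative_sum
        bounded_linear.has_vector_derivative[OF bounded_linear_single_entry] assms)
  then show ?thesis by (simp add: sum_single_entry)
qed

lemma has_vector_derivative_mexp:
  "((\<lambda>t. mexp (msc (of_real t) S)) has_vector_derivative (mexp (msc (of_real t) S) ** S)) (at t)"
proof (rule has_vector_derivative_entrywise)
  fix j l
  define c where "c k = mpow S k $ j $ l / fact k" for k
  have entry: "(\<lambda>k. c k * z ^ k) sums (mexp (msc z S) $ j $ l)" for z
    using bounded_linear.sums[OF bounded_linear_matrix_entry[of j l] mexp_sums[of z S]]
    by (simp add: c_def mult_ac)
  have "diffs c k * z ^ k = z ^ k / fact k * (mpow S k ** S) $ j $ l" for k z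
    by (simp add: diffs_def c_def mpow_Suc' divide_simps del: mpow.simps of_nat_Suc)
  then have entry': "(\<lambda>k. diffs c k * z ^ k) sums ((mexp (msc z S) ** S) $ j $ l)" for z
    using bounded_linear.sums[OF bounded_linear_matrix_entry[of j l]
        bounded_linear.sums[OF bounded_linear_matrix_mul_right[of S] mexp_sums[of z S]]]
    by (simp add: msc_mult_left)
  have "((\<lambda>z. \<Sum>k. c k * z ^ k) has_field_derivative (\<Sum>k. diffs c k * of_real t ^ k)) (at (of_real t))"
    by (rule termdiffs_strong_converges_everywhere) (use entry in \<open>auto simp: sums_iff\<close>)
  then have "((\<lambda>z. mexp (msc z S) $ j $ l) has_field_derivative
      ((mexp (msc (of_real t) S) ** S) $ j $ l)) (at (of_real t))"
    using entry entry' by (simp add: sums_iff)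
  then show "((\<lambda>t. mexp (msc (of_real t) S) $ j $ l) has_vector_derivative
      (mexp (msc (of_real t) S) ** S) $ j $ l) (at t)"
    by (rule has_vector_derivative_real_field)
qed

lemma has_vector_derivative_mexp_sandwich:
  "((\<lambda>t. (Y::complex^'p^'n) ** mexp (msc (of_real t) S) ** (Z::complex^'q^'p))
     has_vector_derivative (Y ** (mexp (msc (of_real t) S) ** S) ** Z)) (at t)"
  using bounded_linear.has_vector_derivative[OF
      bounded_linear_compose[OF bounded_linear_matrix_mul_right bounded_linear_matrix_mul_left]
      has_vector_derivative_mexp] .

lemma vder_mexp:
  "vder i (\<lambda>t. (Y::complex^'p^'n) ** mexp (msc (of_real t) S))
     = (\<lambda>t. Y ** mexp (msc (of_real t) S) ** mpow S i)"
proof (induct i)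
  case 0 then show ?case by (simp add: vder_def)
next
  case (Suc i)
  have "vder (Suc i) (\<lambda>t. Y ** mexp (msc (of_real t) S))
      = (\<lambda>t. vector_derivative (\<lambda>t. Y ** mexp (msc (of_real t) S) ** mpow S i) (at t))"
    by (simp add: vder_def flip: Suc)
  also have "\<dots> = (\<lambda>t. Y ** (mexp (msc (of_real t) S) ** S) ** mpow S i)"
    by (intro ext vector_derivative_at has_vector_derivative_mexp_sandwich)
  finally show ?case by (simp add: matrix_mul_assoc)
qed

lemma int0_mexp:
  assumes "invertible S"
  shows "int0 (\<lambda>t. (Y::complex^'p^'n) ** mexp (msc (of_real t) S)) \<theta>
         = Y ** mexp (msc (of_real \<theta>) S) ** matrix_inv S - Y ** matrix_inv S"
proof -
  define G where "G t = Y ** mexp (msc (of_real t) S) ** matrix_inv S" for t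
  have "Y ** (mexp (msc (of_real t) S) ** S) ** matrix_inv S = Y ** mexp (msc (of_real t) S)" for t
    by (simp add: matrix_inv_right[OF assms] flip: matrix_mul_assoc)
  then have G': "(G has_vector_derivative (Y ** mexp (msc (of_real t) S))) (at t within T)" for t T
    unfolding G_def by (metis has_vector_derivative_mexp_sandwich has_vector_derivative_at_within)
  show ?thesis
  proof (cases "0 \<le> \<theta>")
    case True
    then have "((\<lambda>t. Y ** mexp (msc (of_real t) S)) has_integral (G \<theta> - G 0)) {0..\<theta>}"
      by (intro fundamental_theorem_of_calculus G')
    then show ?thesis using True by (simp add: int0_def integral_unique G_def mexp_zero)
  next
    case False
    then have "((\<lambda>t. Y ** mexp (msc (of_real t) S)) has_integral (G 0 - G \<theta>)) {\<theta>..0}"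
      by (intro fundamental_theorem_of_calculus G') auto
    then show ?thesis using False by (simp add: int0_def integral_unique G_def mexp_zero)
  qed
qed

section \<open>The function \<open>B\<close>\<close>

definition diff_quot :: "(complex \<Rightarrow> complex) \<Rightarrow> complex \<Rightarrow> complex" where
  "diff_quot g z = (if z = 0 then deriv g 0 else (g z - g 0) / z)"

lemma diff_quot_has_fps_expansion:
  assumes "g holomorphic_on ball 0 r" "r > 0"
  shows "diff_quot g has_fps_expansion fps_shift 1 (fps_expansion g 0)"
proof (rule has_fps_expansionI)
  define c where "c = fps_nth (fps_expansion g 0)"
  have c0: "c 0 = g 0" by (simp add: c_def fps_expansion_def)
  have "eventually (\<lambda>u. u \<in> ball 0 r) (nhds (0::complex))"
    using assms(2) by (intro eventually_nhds_in_open) auto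
  then show "eventually (\<lambda>u. (\<lambda>n. fps_nth (fps_shift 1 (fps_expansion g 0)) n * u ^ n)
      sums diff_quot g u) (nhds 0)"
  proof eventually_elim
    case (elim u)
    show ?case
    proof (cases "u = 0")
      case True
      then show ?thesis
        using powser_sums_zero[of "\<lambda>n. c (Suc n)"] by (simp add: diff_quot_def c_def fps_expansion_def)
    next
      case False
      have "(\<lambda>n. c n * u ^ n) sums g u"
        using holomorphic_power_series[OF assms(1) elim] by (simp add: c_def fps_expansion_def)
      then have "(\<lambda>n. c (Suc n) * u ^ Suc n) sums (g u - g 0)"
        using sums_Suc_iff[of "\<lambda>n. c n * u ^ n" "g u - g 0"] by (simp add: c0)
      then have "(\<lambda>n. c (Suc n) * u ^ Suc n / u) sums ((g u - g 0) / u)"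
        by (rule sums_divide)
      then show ?thesis using False by (simp add: diff_quot_def c_def)
    qed
  qed
qed

lemma Bfn_Mfun:
  fixes Ms :: "nat \<Rightarrow> complex^'n^'n"
  assumes "\<forall>i<m. f i holomorphic_on ball 0 r" "r > 0"
  shows "Bfn (Mfun Ms f m) z = - (matrix_inv (Mfun Ms f m 0) ** (\<Sum>i<m. msc (diff_quot (f i) z) (Ms i)))"
proof -
  define M0 where "M0 = Mfun Ms f m 0"
  define E where "E w = - (matrix_inv M0 ** (\<Sum>i<m. msc (diff_quot (f i) w) (Ms i)))" for w
  have quot: "matrix_inv M0 ** msc (1 / w) (M0 - Mfun Ms f m w) = E w" if "w \<noteq> 0" for w
  proof -
    have "M0 - Mfun Ms f m w = (\<Sum>i<m. msc (f i 0 - f i w) (Ms i))"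
      by (simp add: M0_def Mfun_def vec_eq_iff sum_subtractf left_diff_distrib)
    then have "msc (1 / w) (M0 - Mfun Ms f m w) = (\<Sum>i<m. msc ((f i 0 - f i w) / w) (Ms i))"
      by (simp add: msc_sum)
    also have "\<dots> = (\<Sum>i<m. - msc (diff_quot (f i) w) (Ms i))"
      using that by (intro sum.cong refl) (simp add: vec_eq_iff diff_quot_def field_simps)
    also have "\<dots> = - (\<Sum>i<m. msc (diff_quot (f i) w) (Ms i))"
      by (simp add: sum_negf)
    finally show ?thesis by (simp add: E_def matrix_mul_minus_right)
  qed
  have "continuous (at 0) (diff_quot (f i))" if "i < m" for i
    using diff_quot_has_fps_expansion assms that has_fps_expansion_imp_continuous by blast
  then have "(E \<longlongrightarrow> E 0) (at 0)"
    unfolding E_def msc_def continuous_at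
    by (intro tendsto_intros bounded_linear.tendsto[OF bounded_linear_matrix_mul_left]) auto
  then have "((\<lambda>w. matrix_inv M0 ** msc (1 / w) (M0 - Mfun Ms f m w)) \<longlongrightarrow> E 0) (at 0)"
    by (rule Lim_transform_eventually) (auto simp: eventually_at_filter quot)
  then have "Lim (at 0) (\<lambda>w. matrix_inv M0 ** msc (1 / w) (M0 - Mfun Ms f m w)) = E 0"
    by (intro tendsto_Lim) auto
  then show ?thesis
    by (simp add: Bfn_def M0_def[symmetric] quot E_def)
qed

lemma mder0_Bfn_Mfun:
  fixes Ms :: "nat \<Rightarrow> complex^'n^'n"
  assumes "\<forall>i<m. f i holomorphic_on ball 0 r" "r > 0"
  shows "msc (1 / fact k) (mder0 (Bfn (Mfun Ms f m)) k)
         = - (matrix_inv (Mfun Ms f m 0) ** (\<Sum>i<m. msc (fps_nth (fps_expansion (f i) 0) (Suc k)) (Ms i)))"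
proof -
  define N where "N = matrix_inv (Mfun Ms f m 0)"
  have entry: "(\<lambda>z. Bfn (Mfun Ms f m) z $ a $ b)
      = (\<lambda>z. - (\<Sum>i<m. diff_quot (f i) z * (N ** Ms i) $ a $ b))" for a b
    by (simp add: Bfn_Mfun[OF assms] N_def matrix_mul_sum_right msc_mult_right)
  have expansion: "(\<lambda>z. - (\<Sum>i<m. diff_quot (f i) z * (N ** Ms i) $ a $ b)) has_fps_expansion
      - (\<Sum>i<m. fps_shift 1 (fps_expansion (f i) 0) * fps_const ((N ** Ms i) $ a $ b))" for a b
    using assms by (intro fps_expansion_intros diff_quot_has_fps_expansion) auto
  have "(deriv ^^ k) (\<lambda>z. Bfn (Mfun Ms f m) z $ a $ b) 0 / fact k
      = - (\<Sum>i<m. fps_nth (fps_expansion (f i) 0) (Suc k) * (N ** Ms i) $ a $ b)" for a b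
    using fps_nth_fps_expansion[OF expansion[of a b], of k] by (simp add: entry fps_sum_nth)
  then show ?thesis
    by (simp add: vec_eq_iff mder0_def N_def[symmetric] matrix_mul_sum_right msc_mult_right sum_negf)
qed

section \<open>The operator \<open>\<B>\<close> applied to \<open>F\<close>\<close>

lemma Bop_series_sums:
  fixes Ms :: "nat \<Rightarrow> complex^'n^'n" and Y :: "complex^'p^'n" and S :: "complex^'p^'p"
  assumes holo: "\<forall>i<m. f i holomorphic_on ball 0 r" and "r > 0"
    and "invertible S" and "spec S \<subseteq> ball 0 r"
  shows "(\<lambda>k. msc (1 / fact k) (mder0 (Bfn (Mfun Ms f m)) k
                  ** vder k (\<lambda>t. Y ** mexp (msc (of_real t) S)) 0))
         sums - (matrix_inv (Mfun Ms f m 0)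
                 ** (\<Sum>i<m. Ms i ** Y ** ((matfun (f i) S - msc (f i 0) (mat 1)) ** matrix_inv S)))"
proof -
  define N where "N = matrix_inv (Mfun Ms f m 0)"
  define c where "c i = fps_nth (fps_expansion (f i) 0)" for i
  have "msc (1 / fact k) (mder0 (Bfn (Mfun Ms f m)) k ** vder k (\<lambda>t. Y ** mexp (msc (of_real t) S)) 0)
      = msc (1 / fact k) (mder0 (Bfn (Mfun Ms f m)) k) ** (Y ** mpow S k)" for k
    by (simp add: vder_mexp mexp_zero msc_mult_left)
  also have "\<dots> k = - (N ** (\<Sum>i<m. Ms i ** Y ** msc (c i (Suc k)) (mpow S k)))" for k
    by (simp add: mder0_Bfn_Mfun[OF holo \<open>r > 0\<close>] N_def c_def matrix_mul_minus_left
        matrix_mul_sum_left matrix_mul_sum_right msc_mult_left msc_mult_right matrix_mul_assoc)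
  finally have terms: "(\<lambda>k. msc (1 / fact k) (mder0 (Bfn (Mfun Ms f m)) k
      ** vder k (\<lambda>t. Y ** mexp (msc (of_real t) S)) 0))
      = (\<lambda>k. - (N ** (\<Sum>i<m. Ms i ** Y ** msc (c i (Suc k)) (mpow S k))))"
    by (intro ext)
  have "(\<lambda>k. Ms i ** Y ** msc (c i (Suc k)) (mpow S k))
      sums (Ms i ** Y ** ((matfun (f i) S - msc (f i 0) (mat 1)) ** matrix_inv S))" if "i < m" for i
    using bounded_linear.sums[OF bounded_linear_matrix_mul_left
        difference_quotient_matfun_sums[OF holo[rule_format, OF that] assms(4,2,3)]]
    by (simp add: c_def)
  then have "(\<lambda>k. \<Sum>i<m. Ms i ** Y ** msc (c i (Suc k)) (mpow S k))
      sums (\<Sum>i<m. Ms i ** Y ** ((matfun (f i) S - msc (f i 0) (mat 1)) ** matrix_inv S))"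
    by (intro sums_sum) simp
  from sums_minus[OF bounded_linear.sums[OF bounded_linear_matrix_mul_left[of N] this]]
  show ?thesis unfolding terms N_def .
qed

theorem mainTheorem4:
  fixes r :: real and m :: nat
    and Ms :: "nat \<Rightarrow> complex^'n^'n" and f :: "nat \<Rightarrow> complex \<Rightarrow> complex"
    and Y :: "complex^'p^'n" and S :: "complex^'p^'p" and \<theta> :: real
  assumes "r > 0"
    and "\<forall>i<m. f i holomorphic_on ball 0 r"
    and "invertible (Mfun Ms f m 0)"
    and "invertible S"
    and "spec S \<subseteq> ball 0 r"
  shows "Bop (Bfn (Mfun Ms f m)) (\<lambda>t. Y ** mexp (msc (complex_of_real t) S)) \<theta>
           - (Y ** mexp (msc (complex_of_real \<theta>) S)) ** matrix_inv S
         = - ((matrix_inv (Mfun Ms f m 0) ** (\<Sum>i<m. Ms i ** Y ** matfun (f i) S)) ** matrix_inv S)"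
proof -
  define M0 where "M0 = Mfun Ms f m 0"
  define N where "N = matrix_inv M0"
  define Si where "Si = matrix_inv S"
  define MYS where "MYS = (\<Sum>i<m. Ms i ** Y ** matfun (f i) S)"
  have "(\<Sum>k. msc (1 / fact k) (mder0 (Bfn (Mfun Ms f m)) k
                 ** vder k (\<lambda>t. Y ** mexp (msc (of_real t) S)) 0))
      = - (N ** (\<Sum>i<m. Ms i ** Y ** ((matfun (f i) S - msc (f i 0) (mat 1)) ** Si)))"
    unfolding N_def M0_def Si_def using Bop_series_sums[OF assms(2,1,4,5)] by (rule sums_unique[symmetric])
  also have "(\<Sum>i<m. Ms i ** Y ** ((matfun (f i) S - msc (f i 0) (mat 1)) ** Si)) = MYS ** Si - M0 ** Y ** Si"
    by (simp add: MYS_def M0_def Mfun_def matrix_mul_diff_left matrix_mul_diff_right matrix_mul_assoc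
        msc_mult_left msc_mult_right matrix_mul_sum_left sum_subtractf)
  also have "- (N ** (MYS ** Si - M0 ** Y ** Si)) = Y ** Si - N ** MYS ** Si"
    using matrix_inv_left[OF assms(3)] by (simp add: N_def M0_def matrix_mul_diff_right matrix_mul_assoc)
  finally show ?thesis
    by (simp add: Bop_def int0_mexp[OF assms(4)] N_def Si_def M0_def MYS_def)
qed

end
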